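(* Let $G$ be a graph with a valid edge partition, and let $V_1,V_2$ be the associated vertex partition. Suppose that $\sum_{u\in V_i}\deg u$ is odd for $i=1,2$ and that $G$ has an odd number of vertices. Then the number of cycles compatible with the edge partition is odd.
   Context: A spanning 2-forest is a spanning forest with exactly two trees (a tree may be a single vertex). A valid edge partition of a graph is a bipartition of its edge set such that one part is the edge set of a spanning tree and the other part is the edge set of a spanning 2-forest. The associated vertex partition $V_1,V_2$ consists of the vertex sets of the two trees of the 2-forest. A cycle $C$ is compatible with the valid edge partition if all vertices of $C$ lie in the same part of the vertex partition and exactly one edge of $C$ lies in the spanning-tree part. Degrees are taken in $G$. *)

theory Defs
  imports Main
begin

definition simple_graph :: "'a set \<Rightarrow> 'a set set \<Rightarrow> bool" where
  "simple_graph V E \<longleftrightarrow> finite V \<and>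
     (\<forall>e\<in>E. \<exists>x y. x \<noteq> y \<and> e = {x, y} \<and> x \<in> V \<and> y \<in> V)"

definition deg :: "'a set set \<Rightarrow> 'a \<Rightarrow> nat" where
  "deg E u = card {e \<in> E. u \<in> e}"

definition cycle_edges :: "'a list \<Rightarrow> 'a set set" where
  "cycle_edges vs = {{vs ! i, vs ! ((i + 1) mod length vs)} | i. i < length vs}"

definition is_cycle :: "'a set set \<Rightarrow> 'a set set \<Rightarrow> bool" where
  "is_cycle E C \<longleftrightarrow> (\<exists>vs. distinct vs \<and> length vs \<ge> 3 \<and> C = cycle_edges vs) \<and> C \<subseteq> E"

definition acyclic_edges :: "'a set set \<Rightarrow> bool" where
  "acyclic_edges F \<longleftrightarrow> \<not> (\<exists>C. is_cycle F C)"

definition edge_rel :: "'a set set \<Rightarrow> ('a \<times> 'a) set" where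
  "edge_rel F = {(x, y). {x, y} \<in> F}"

definition connected_on :: "'a set \<Rightarrow> 'a set set \<Rightarrow> bool" where
  "connected_on W F \<longleftrightarrow> (\<forall>u\<in>W. \<forall>v\<in>W. (u, v) \<in> (edge_rel F)\<^sup>*)"

definition spanning_tree :: "'a set \<Rightarrow> 'a set set \<Rightarrow> bool" where
  "spanning_tree V T \<longleftrightarrow> (\<forall>e\<in>T. e \<subseteq> V) \<and> connected_on V T \<and> acyclic_edges T"

definition spanning_2forest :: "'a set \<Rightarrow> 'a set set \<Rightarrow> 'a set \<Rightarrow> 'a set \<Rightarrow> bool" where
  "spanning_2forest V F V1 V2 \<longleftrightarrow>
     V1 \<union> V2 = V \<and> V1 \<inter> V2 = {} \<and> V1 \<noteq> {} \<and> V2 \<noteq> {} \<and>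
     (\<forall>e\<in>F. e \<subseteq> V1 \<or> e \<subseteq> V2) \<and>
     connected_on V1 F \<and> connected_on V2 F \<and> acyclic_edges F"

definition valid_edge_partition ::
  "'a set \<Rightarrow> 'a set set \<Rightarrow> 'a set set \<Rightarrow> 'a set set \<Rightarrow> 'a set \<Rightarrow> 'a set \<Rightarrow> bool" where
  "valid_edge_partition V E T F V1 V2 \<longleftrightarrow>
     T \<union> F = E \<and> T \<inter> F = {} \<and> spanning_tree V T \<and> spanning_2forest V F V1 V2"

definition compatible_cycle ::
  "'a set set \<Rightarrow> 'a set set \<Rightarrow> 'a set \<Rightarrow> 'a set \<Rightarrow> 'a set set \<Rightarrow> bool" where
  "compatible_cycle E T V1 V2 C \<longleftrightarrow>
     is_cycle E C \<and> (\<Union>C \<subseteq> V1 \<or> \<Union>C \<subseteq> V2) \<and> card (C \<inter> T) = 1"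

end

theory Submission
  imports Defs "HOL-Library.Transitive_Closure_Table"
begin

text \<open>
  The spanning tree \<open>T\<close> has \<open>card V - 1\<close> edges, an even number. The edges of \<open>G\<close>
  between \<open>V1\<close> and \<open>V2\<close> all lie in \<open>T\<close>, since the trees of \<open>F\<close> do not cross, and
  their number has the parity of the degree sum over \<open>V1\<close>, which is odd. Hence an odd
  number of tree edges lie inside \<open>V1\<close> or \<open>V2\<close>. Such an edge closes exactly one cycle
  with the tree of \<open>F\<close> spanning its part, and these fundamental cycles are precisely the
  compatible cycles.
\<close>

section \<open>Reachability along edges\<close>

lemma sym_rtrancl_edge_rel: "sym ((edge_rel G)\<^sup>*)"
  by (rule sym_rtrancl) (auto simp: sym_def edge_rel_def insert_commute)

lemma rtrancl_edge_rel_sym: "(x, y) \<in> (edge_rel G)\<^sup>* \<Longrightarrow> (y, x) \<in> (edge_rel G)\<^sup>*"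
  using sym_rtrancl_edge_rel by (metis symD)

lemma rtrancl_edge_rel_mono: "G \<subseteq> H \<Longrightarrow> (edge_rel G)\<^sup>* \<subseteq> (edge_rel H)\<^sup>*"
  by (rule rtrancl_mono) (auto simp: edge_rel_def)

lemma rtrancl_edge_rel_closed:
  assumes "(a, z) \<in> (edge_rel G)\<^sup>*" "a \<in> W" "\<forall>e\<in>G. e \<subseteq> W \<or> e \<inter> W = {}"
  shows "z \<in> W"
  using assms(1,2)
proof (induction rule: rtrancl_induct)
  case (step w z)
  then have "{w, z} \<in> G" "w \<in> W" by (simp_all add: edge_rel_def)
  with assms(3) show ?case by fastforce
qed

lemma rtrancl_edge_rel_insert:
  "(v, w) \<in> (edge_rel (insert {x, y} G))\<^sup>* \<longleftrightarrow>
     (v, w) \<in> (edge_rel G)\<^sup>* \<or>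
     (v, x) \<in> (edge_rel G)\<^sup>* \<and> (y, w) \<in> (edge_rel G)\<^sup>* \<or>
     (v, y) \<in> (edge_rel G)\<^sup>* \<and> (x, w) \<in> (edge_rel G)\<^sup>*"
  (is "?lhs \<longleftrightarrow> ?rhs")
proof
  show "?lhs \<Longrightarrow> ?rhs"
  proof (induction rule: rtrancl_induct)
    case (step w z)
    then have "{w, z} = {x, y} \<or> (w, z) \<in> edge_rel G" by (auto simp: edge_rel_def)
    then show ?case
      using step.IH rtrancl_into_rtrancl[of _ w "edge_rel G" z] by (auto simp: doubleton_eq_iff)
  qed simp
next
  let ?S = "(edge_rel (insert {x, y} G))\<^sup>*"
  have sub: "(edge_rel G)\<^sup>* \<subseteq> ?S" by (rule rtrancl_edge_rel_mono) auto
  have "(x, y) \<in> ?S" "(y, x) \<in> ?S" by (auto simp: edge_rel_def insert_commute)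
  then show "?rhs \<Longrightarrow> ?lhs"
    using sub by (meson rtrancl_trans subsetD)
qed

lemma rtrancl_path_set_reachable: "rtrancl_path r x xs y \<Longrightarrow> z \<in> set xs \<Longrightarrow> r\<^sup>*\<^sup>* x z"
  by (induction rule: rtrancl_path.induct) (auto intro: converse_rtranclp_into_rtranclp)

lemma rtrancl_edge_rel_insert_connected:
  assumes "(x, y) \<in> (edge_rel G)\<^sup>*"
  shows "(edge_rel (insert {x, y} G))\<^sup>* = (edge_rel G)\<^sup>*"
proof -
  have yx: "(y, x) \<in> (edge_rel G)\<^sup>*" using rtrancl_edge_rel_sym[OF assms] .
  have "(v, w) \<in> (edge_rel G)\<^sup>*" if "(v, w) \<in> (edge_rel (insert {x, y} G))\<^sup>*" for v w
    using that assms yx unfolding rtrancl_edge_rel_insert by (meson rtrancl_trans)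
  moreover have "(edge_rel G)\<^sup>* \<subseteq> (edge_rel (insert {x, y} G))\<^sup>*"
    by (rule rtrancl_edge_rel_mono) blast
  ultimately show ?thesis by auto
qed

section \<open>Cycles\<close>

lemma is_cycle_mono: "is_cycle G C \<Longrightarrow> G \<subseteq> H \<Longrightarrow> is_cycle H C"
  by (auto simp: is_cycle_def)

lemma acyclic_edges_subset: "acyclic_edges H \<Longrightarrow> G \<subseteq> H \<Longrightarrow> acyclic_edges G"
  by (meson acyclic_edges_def is_cycle_mono)

lemma Union_cycle_edges_subset: "vs \<noteq> [] \<Longrightarrow> \<Union>(cycle_edges vs) \<subseteq> set vs"
  by (auto simp: cycle_edges_def intro!: nth_mem mod_less_divisor)

lemma cycle_edges_path:
  assumes P: "rtrancl_path (\<lambda>a b. {a, b} \<in> G) x xs y" and "xs \<noteq> []"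
  shows "cycle_edges (x # xs) \<subseteq> insert {x, y} G" "{x, y} \<in> cycle_edges (x # xs)"
proof -
  define vs where "vs = x # xs"
  define n where "n = length vs"
  have last: "vs ! (n - 1) = y"
    using rtrancl_path_last[OF P assms(2)] assms(2) by (simp add: n_def vs_def last_conv_nth)
  have wrap: "(n - 1 + 1) mod n = 0" by (simp add: n_def vs_def)
  have "{vs ! i, vs ! ((i + 1) mod n)} \<in> insert {x, y} G" if "i < n" for i
  proof (cases "i + 1 < n")
    case True
    then show ?thesis using rtrancl_path_nth[OF P, of i] by (simp add: vs_def n_def)
  next
    case False
    with that have "i = n - 1" by simp
    then show ?thesis using last wrap by (simp add: vs_def insert_commute)
  qed
  then show "cycle_edges (x # xs) \<subseteq> insert {x, y} G"
    by (auto simp: cycle_edges_def vs_def n_def)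
  have "{vs ! (n - 1), vs ! ((n - 1 + 1) mod n)} = {x, y}"
    using last wrap by (simp add: vs_def insert_commute)
  moreover have "n - 1 < length vs" by (simp add: n_def vs_def)
  ultimately show "{x, y} \<in> cycle_edges (x # xs)" unfolding cycle_edges_def n_def vs_def by blast
qed

lemma cycle_through_new_edge:
  assumes "(x, y) \<in> (edge_rel G)\<^sup>*" "x \<noteq> y" "{x, y} \<notin> G"
  obtains C where "is_cycle (insert {x, y} G) C" "{x, y} \<in> C"
    "\<Union>C \<subseteq> {z. (x, z) \<in> (edge_rel G)\<^sup>*}"
proof -
  let ?r = "\<lambda>a b. {a, b} \<in> G"
  have r_eq: "(edge_rel G)\<^sup>* = {(a, b). ?r\<^sup>*\<^sup>* a b}"
    by (simp add: rtranclp_rtrancl_eq edge_rel_def)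
  from assms(1) obtain xs0 where "rtrancl_path ?r x xs0 y"
    by (auto simp: r_eq rtranclp_eq_rtrancl_path)
  then obtain xs where P: "rtrancl_path ?r x xs y" and D: "distinct (x # xs)"
    using rtrancl_path_distinct by metis
  have ne: "xs \<noteq> []" using P assms(2) by (auto elim: rtrancl_path.cases)
  have "length xs \<ge> 2"
  proof (rule ccontr)
    assume "\<not> length xs \<ge> 2"
    with ne rtrancl_path_last[OF P ne] have "xs = [y]" by (cases xs; cases "tl xs") auto
    with rtrancl_path_nth[OF P, of 0] assms(3) show False by simp
  qed
  with D cycle_edges_path[OF P ne] have "is_cycle (insert {x, y} G) (cycle_edges (x # xs))"
    unfolding is_cycle_def by (intro conjI exI[of _ "x # xs"]) simp_all
  moreover have "set (x # xs) \<subseteq> {z. (x, z) \<in> (edge_rel G)\<^sup>*}"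
    using rtrancl_path_set_reachable[OF P] by (auto simp: r_eq)
  ultimately show ?thesis
    using that cycle_edges_path(2)[OF P ne] Union_cycle_edges_subset[of "x # xs"] by blast
qed

lemma cycle_edges_index_inj:
  assumes "distinct vs" "length vs \<ge> 3" "i < length vs" "j < length vs"
    and "{vs ! j, vs ! ((j + 1) mod length vs)} = {vs ! i, vs ! ((i + 1) mod length vs)}"
  shows "j = i"
proof (rule ccontr)
  assume "j \<noteq> i"
  let ?n = "length vs"
  have "0 < ?n" using assms(2) by linarith
  then have lt: "(j + 1) mod ?n < ?n" "(i + 1) mod ?n < ?n" by simp_all
  have "vs ! j \<noteq> vs ! i" using \<open>j \<noteq> i\<close> assms(1,3,4) nth_eq_iff_index_eq by metis
  with assms(5) have "vs ! j = vs ! ((i + 1) mod ?n)" "vs ! ((j + 1) mod ?n) = vs ! i"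
    by (auto simp: doubleton_eq_iff)
  then have "j = (i + 1) mod ?n" "(j + 1) mod ?n = i"
    using assms(1,3,4) lt nth_eq_iff_index_eq by metis+
  then have "(i + 2) mod ?n = i mod ?n" using assms(3) by (simp add: mod_Suc_eq)
  then have "?n dvd 2"
    using mod_eq_dvd_iff_nat[of i "i + 2" ?n] by simp
  with assms(2) show False by (simp add: nat_dvd_not_less)
qed

lemma cycle_edges_minus_edge_connected:
  assumes D: "distinct vs" and L: "length vs \<ge> 3" and g: "g \<in> cycle_edges vs" "g = {x, y}"
  shows "(x, y) \<in> (edge_rel (cycle_edges vs - {g}))\<^sup>*"
proof -
  let ?n = "length vs"
  let ?R = "edge_rel (cycle_edges vs - {g})"
  have n: "0 < ?n" using L by linarith
  from g obtain i where i: "i < ?n" and gi: "g = {vs ! i, vs ! ((i + 1) mod ?n)}"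
    by (auto simp: cycle_edges_def)
  have walk: "(vs ! ((i + 1) mod ?n), vs ! ((i + 1 + k) mod ?n)) \<in> ?R\<^sup>*" if "k < ?n" for k
    using that
  proof (induction k)
    case (Suc k)
    define j where "j = (i + 1 + k) mod ?n"
    have j: "j < ?n" using n by (simp add: j_def)
    have "j \<noteq> i"
    proof
      assume "j = i"
      then have "(i + (k + 1)) mod ?n = i mod ?n" using i by (simp add: j_def ac_simps)
      then have "?n dvd k + 1" by (simp add: mod_eq_dvd_iff_nat)
      with Suc.prems show False by (simp add: nat_dvd_not_less)
    qed
    then have "{vs ! j, vs ! ((j + 1) mod ?n)} \<in> cycle_edges vs - {g}"
      using cycle_edges_index_inj[OF D L i j] gi j by (auto simp: cycle_edges_def)
    moreover have "(j + 1) mod ?n = (i + 1 + Suc k) mod ?n" by (simp add: j_def mod_Suc_eq)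
    ultimately have "(vs ! j, vs ! ((i + 1 + Suc k) mod ?n)) \<in> ?R"
      by (simp add: edge_rel_def)
    with Suc show ?case by (simp add: j_def)
  qed simp
  have "i + 1 + (?n - 1) = i + ?n" using n by linarith
  then have "(i + 1 + (?n - 1)) mod ?n = i" using i by simp
  with walk[of "?n - 1"] L have "(vs ! ((i + 1) mod ?n), vs ! i) \<in> ?R\<^sup>*" by simp
  with gi g(2) show ?thesis
    using rtrancl_edge_rel_sym by (auto simp: doubleton_eq_iff)
qed

lemma acyclic_edges_insert_not_connected:
  assumes "acyclic_edges (insert {x, y} G)" "x \<noteq> y" "{x, y} \<notin> G"
  shows "(x, y) \<notin> (edge_rel G)\<^sup>*"
  using assms cycle_through_new_edge unfolding acyclic_edges_def by metis

lemma cycle_closing_edge_within: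
  assumes "e = {a, b}" "a \<noteq> b" "e \<notin> F" "e \<subseteq> W" "connected_on W F"
    and "\<forall>f\<in>F. f \<subseteq> W \<or> f \<inter> W = {}"
  obtains C where "is_cycle (insert e F) C" "e \<in> C" "\<Union>C \<subseteq> W"
proof -
  have "a \<in> W" "b \<in> W" using assms(1,4) by auto
  then have "(a, b) \<in> (edge_rel F)\<^sup>*" using assms(5) by (simp add: connected_on_def)
  then obtain C where "is_cycle (insert e F) C" "e \<in> C" "\<Union>C \<subseteq> {z. (a, z) \<in> (edge_rel F)\<^sup>*}"
    using cycle_through_new_edge assms(1-3) by metis
  moreover have "{z. (a, z) \<in> (edge_rel F)\<^sup>*} \<subseteq> W"
    using rtrancl_edge_rel_closed[OF _ \<open>a \<in> W\<close> assms(6)] by blast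
  ultimately show ?thesis using that by blast
qed

text \<open>The cycle that \<open>e\<close> closes in a forest \<open>F\<close>, described without choosing a path:
  its edges in \<open>F\<close> are exactly those whose removal separates the ends of \<open>e\<close>.\<close>
definition fundamental_cycle :: "'a set set \<Rightarrow> 'a set \<Rightarrow> 'a set set" where
  "fundamental_cycle F e =
     insert e {f \<in> F. \<forall>a b. e = {a, b} \<longrightarrow> (a, b) \<notin> (edge_rel (F - {f}))\<^sup>*}"

lemma mem_fundamental_cycle_iff:
  assumes "e = {a, b}"
  shows "f \<in> fundamental_cycle F e \<longleftrightarrow>
    f = e \<or> f \<in> F \<and> (a, b) \<notin> (edge_rel (F - {f}))\<^sup>*"
proof -
  let ?R = "edge_rel (F - {f})"
  have "(a', b') \<in> ?R\<^sup>* \<longleftrightarrow> (a, b) \<in> ?R\<^sup>*" if "e = {a', b'}" for a' b'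
  proof -
    from that assms have "{a', b'} = {a, b}" by (simp only:)
    then have "a' = a \<and> b' = b \<or> a' = b \<and> b' = a" by (simp add: doubleton_eq_iff)
    then show ?thesis using rtrancl_edge_rel_sym[of a b] rtrancl_edge_rel_sym[of b a] by fast
  qed
  then show ?thesis using assms unfolding fundamental_cycle_def by blast
qed

lemma cycle_eq_fundamental_cycle:
  assumes acyc: "acyclic_edges F" and edges: "\<forall>f\<in>F. \<exists>x y. x \<noteq> y \<and> f = {x, y}"
    and C: "is_cycle (insert e F) C" and "e \<in> C" "e \<notin> F"
  shows "C = fundamental_cycle F e"
proof -
  from C obtain vs where D: "distinct vs" and L: "length vs \<ge> 3"
    and Cvs: "C = cycle_edges vs" and CF: "C \<subseteq> insert e F"
    by (auto simp: is_cycle_def)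
  from \<open>e \<in> C\<close> obtain a b where eab: "e = {a, b}" by (auto simp: Cvs cycle_edges_def)
  have conn: "(x, y) \<in> (edge_rel (C - {g}))\<^sup>*" if "g \<in> C" "g = {x, y}" for g x y
    using cycle_edges_minus_edge_connected[OF D L] that unfolding Cvs .
  txt \<open>Otherwise the rest of \<open>C\<close> would join the ends of \<open>f\<close> in \<open>F - {f}\<close>,
    and together with \<open>f\<close> this gives a cycle in \<open>F\<close>.\<close>
  have sep: "(a, b) \<notin> (edge_rel (F - {f}))\<^sup>*" if "f \<in> C" "f \<noteq> e" for f
  proof
    assume ab: "(a, b) \<in> (edge_rel (F - {f}))\<^sup>*"
    have fF: "f \<in> F" using that CF by blast
    then obtain p q where pq: "p \<noteq> q" "f = {p, q}" using edges by blast
    have "C - {f} \<subseteq> insert {a, b} (F - {f})" using CF eab by blast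
    then have "(p, q) \<in> (edge_rel (insert {a, b} (F - {f})))\<^sup>*"
      using conn[OF \<open>f \<in> C\<close> pq(2)] rtrancl_edge_rel_mono by blast
    then have "(p, q) \<in> (edge_rel (F - {f}))\<^sup>*"
      unfolding rtrancl_edge_rel_insert_connected[OF ab] .
    moreover have "insert {p, q} (F - {f}) = F" using pq fF by blast
    ultimately show False
      using acyclic_edges_insert_not_connected[of p q "F - {f}"] acyc pq by simp
  qed
  have nonsep: "(a, b) \<in> (edge_rel (F - {f}))\<^sup>*" if "f \<notin> C" for f
  proof -
    have "C - {e} \<subseteq> F - {f}" using CF that by blast
    then show ?thesis using conn[OF \<open>e \<in> C\<close> eab] rtrancl_edge_rel_mono by blast
  qed
  show ?thesis
  proof (rule set_eqI)
    fix f
    show "f \<in> C \<longleftrightarrow> f \<in> fundamental_cycle F e"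
      unfolding mem_fundamental_cycle_iff[OF eab] using sep nonsep \<open>e \<in> C\<close> CF by blast
  qed
qed

section \<open>Counting components of a forest\<close>

definition component :: "'a set set \<Rightarrow> 'a \<Rightarrow> 'a set" where
  "component G v = {w. (v, w) \<in> (edge_rel G)\<^sup>*}"

lemma self_in_component [simp]: "v \<in> component G v"
  by (simp add: component_def)

lemma component_eq:
  assumes "w \<in> component G v"
  shows "component G v = component G w"
proof -
  have vw: "(v, w) \<in> (edge_rel G)\<^sup>*" using assms by (simp add: component_def)
  then have wv: "(w, v) \<in> (edge_rel G)\<^sup>*" by (rule rtrancl_edge_rel_sym)
  show ?thesis
    unfolding component_def using rtrancl_trans[OF vw] rtrancl_trans[OF wv] by blast
qed

lemma component_insert_edge:
  "component (insert {x, y} G) v =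
     component G v \<union> (if x \<in> component G v then component G y else {})
       \<union> (if y \<in> component G v then component G x else {})"
  unfolding component_def rtrancl_edge_rel_insert by auto

lemma component_insert_edge_joined:
  assumes "x \<in> component G v \<or> y \<in> component G v"
  shows "component (insert {x, y} G) v = component G x \<union> component G y"
proof (cases "x \<in> component G v")
  case True
  then have "component G v = component G x" by (rule component_eq)
  then show ?thesis using component_eq[of y G x] by (auto simp: component_insert_edge)
next
  case False
  with assms have "y \<in> component G v" by simp
  then have "component G v = component G y" by (rule component_eq)
  with False show ?thesis by (auto simp: component_insert_edge)
qed

lemma component_insert_edge_apart:
  "x \<notin> component G v \<Longrightarrow> y \<notin> component G v \<Longrightarrow> component (insert {x, y} G) v = component G v"
  by (simp add: component_insert_edge)

lemma components_insert_edge: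
  assumes "x \<in> V"
  shows "component (insert {x, y} G) ` V =
    insert (component G x \<union> component G y) (component G ` V - {component G x, component G y})"
    (is "?new = insert (?cx \<union> ?cy) (?B - {?cx, ?cy})")
proof
  show "?new \<subseteq> insert (?cx \<union> ?cy) (?B - {?cx, ?cy})"
  proof
    fix A assume "A \<in> ?new"
    then obtain v where v: "v \<in> V" "A = component (insert {x, y} G) v" by blast
    show "A \<in> insert (?cx \<union> ?cy) (?B - {?cx, ?cy})"
    proof (cases "x \<in> component G v \<or> y \<in> component G v")
      case True
      then show ?thesis using component_insert_edge_joined[OF True] v(2) by simp
    next
      case False
      then have "component G v \<noteq> ?cx" "component G v \<noteq> ?cy"
        using self_in_component by metis+
      moreover have "A = component G v"
        using False component_insert_edge_apart[of x G v y] v(2) by simp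
      ultimately show ?thesis using v(1) by blast
    qed
  qed
  show "insert (?cx \<union> ?cy) (?B - {?cx, ?cy}) \<subseteq> ?new"
  proof
    fix A assume "A \<in> insert (?cx \<union> ?cy) (?B - {?cx, ?cy})"
    then consider "A = ?cx \<union> ?cy"
      | v where "v \<in> V" "A = component G v" "A \<noteq> ?cx" "A \<noteq> ?cy" by blast
    then show "A \<in> ?new"
    proof cases
      case 1
      then have "A = component (insert {x, y} G) x"
        using component_insert_edge_joined[of x G x y] by simp
      then show ?thesis using assms by (rule image_eqI)
    next
      case 2
      have "z \<notin> component G v" if "z \<in> {x, y}" for z
      proof
        assume "z \<in> component G v"
        then have "component G v = component G z" by (rule component_eq)
        with 2 that show False by auto
      qed
      then have "A = component (insert {x, y} G) v"
        using component_insert_edge_apart[of x G v y] 2 by simp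
      then show ?thesis using \<open>v \<in> V\<close> by (rule image_eqI)
    qed
  qed
qed

lemma card_components_insert_edge:
  assumes "finite V" "x \<in> V" "y \<in> V" "y \<notin> component G x"
  shows "card (component G ` V) = card (component (insert {x, y} G) ` V) + 1"
proof -
  let ?cx = "component G x" and ?cy = "component G y" and ?B = "component G ` V"
  have ne: "?cx \<noteq> ?cy" using assms(4) self_in_component[of y G] by metis
  have "?cx \<union> ?cy \<notin> ?B"
  proof
    assume "?cx \<union> ?cy \<in> ?B"
    then obtain v where "?cx \<union> ?cy = component G v" by blast
    moreover from this have "component G v = ?cx"
      using component_eq[of x G v] self_in_component[of x G] by blast
    ultimately show False using assms(4) self_in_component[of y G] by blast
  qed
  then have "card (component (insert {x, y} G) ` V) = card (?B - {?cx, ?cy}) + 1"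
    unfolding components_insert_edge[OF assms(2)] using assms(1) by simp
  moreover have "card (?B - {?cx, ?cy}) = card ?B - 2"
    using assms(1-3) ne by (simp add: card_Diff_subset)
  moreover have "card {?cx, ?cy} \<le> card ?B"
    using assms(1-3) by (intro card_mono) auto
  ultimately show ?thesis using ne by simp
qed

lemma card_forest:
  assumes "finite V" "finite G" "\<forall>e\<in>G. \<exists>x y. x \<noteq> y \<and> e = {x, y}" "\<forall>e\<in>G. e \<subseteq> V"
    and "acyclic_edges G"
  shows "card V = card G + card (component G ` V)"
  using assms(2-5)
proof (induction G rule: finite_induct)
  case empty
  have "component {} ` V = (\<lambda>v. {v}) ` V" by (auto simp: component_def edge_rel_def)
  then show ?case by (simp add: card_image)
next
  case (insert f G)
  from insert.prems(1) obtain x y where xy: "x \<noteq> y" "f = {x, y}" by blast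
  moreover have "f \<subseteq> V" using insert.prems(2) by blast
  ultimately have "x \<in> V" "y \<in> V" by simp_all
  have "acyclic_edges G" using insert.prems(3) acyclic_edges_subset by blast
  with insert have IH: "card V = card G + card (component G ` V)" by blast
  have "y \<notin> component G x"
    using acyclic_edges_insert_not_connected[of x y G] insert xy by (simp add: component_def)
  with IH show ?case
    using card_components_insert_edge[OF assms(1) \<open>x \<in> V\<close> \<open>y \<in> V\<close>] insert.hyps xy(2) by simp
qed

lemma card_spanning_tree:
  assumes "finite V" "V \<noteq> {}" "spanning_tree V T" "\<forall>e\<in>T. \<exists>x y. x \<noteq> y \<and> e = {x, y}"
  shows "card V = card T + 1"
proof -
  have TV: "\<forall>e\<in>T. e \<subseteq> V" and conn: "connected_on V T" and acyc: "acyclic_edges T"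
    using assms(3) by (simp_all add: spanning_tree_def)
  have "T \<subseteq> Pow V" using TV by blast
  then have "finite T" using assms(1) by (simp add: finite_subset)
  have "component T v = V" if "v \<in> V" for v
  proof
    show "component T v \<subseteq> V"
      using rtrancl_edge_rel_closed[of v _ T V] that TV by (auto simp: component_def)
    show "V \<subseteq> component T v"
      using conn that by (auto simp: connected_on_def component_def)
  qed
  then have "component T ` V = {V}" using assms(2) by auto
  then show ?thesis using card_forest[OF assms(1) \<open>finite T\<close> assms(4) TV acyc] by simp
qed

section \<open>Parity of the crossing edges\<close>

lemma simple_graph_finite_edges:
  assumes "simple_graph V E"
  shows "finite E"
proof -
  have "E \<subseteq> Pow V"
  proof
    fix e assume "e \<in> E"
    with assms obtain x y where "e = {x, y}" "x \<in> V" "y \<in> V"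
      unfolding simple_graph_def by blast
    then show "e \<in> Pow V" by simp
  qed
  moreover have "finite V" using assms by (simp add: simple_graph_def)
  ultimately show ?thesis by (simp add: finite_subset)
qed

lemma sum_deg_eq_sum_card_Int:
  assumes "finite E" "finite W"
  shows "(\<Sum>u\<in>W. deg E u) = (\<Sum>e\<in>E. card (e \<inter> W))"
proof -
  have "deg E u = (\<Sum>e\<in>E. if u \<in> e then 1 else 0)" for u
    unfolding deg_def using sum.inter_filter[OF assms(1), of "\<lambda>_. 1::nat"] by simp
  then have "(\<Sum>u\<in>W. deg E u) = (\<Sum>u\<in>W. \<Sum>e\<in>E. if u \<in> e then 1 else 0)" by simp
  also have "\<dots> = (\<Sum>e\<in>E. \<Sum>u\<in>W. if u \<in> e then 1 else 0)" by (rule sum.swap)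
  also have "\<dots> = (\<Sum>e\<in>E. card (e \<inter> W))"
  proof (rule sum.cong[OF refl])
    fix e
    have "(\<Sum>u\<in>W. if u \<in> e then 1 else 0) = card {u \<in> W. u \<in> e}"
      using assms(2) by (simp add: sum.inter_filter[symmetric])
    also have "{u \<in> W. u \<in> e} = e \<inter> W" by blast
    finally show "(\<Sum>u\<in>W. if u \<in> e then 1 else 0) = card (e \<inter> W)" .
  qed
  finally show ?thesis .
qed

lemma odd_card_Int_doubleton_iff:
  assumes "x \<noteq> y" "x \<in> V1 \<union> V2" "y \<in> V1 \<union> V2" "V1 \<inter> V2 = {}"
  shows "odd (card ({x, y} \<inter> V1)) \<longleftrightarrow> \<not> ({x, y} \<subseteq> V1 \<or> {x, y} \<subseteq> V2)"
  using assms by (cases "x \<in> V1"; cases "y \<in> V1") (auto simp: Int_insert_left)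

lemma odd_card_crossing_edges:
  assumes "simple_graph V E" "V1 \<union> V2 = V" "V1 \<inter> V2 = {}" "odd (\<Sum>u\<in>V1. deg E u)"
  shows "odd (card {e\<in>E. \<not> (e \<subseteq> V1 \<or> e \<subseteq> V2)})"
proof -
  have fV: "finite V" and edges: "\<forall>e\<in>E. \<exists>x y. x \<noteq> y \<and> e = {x, y} \<and> x \<in> V \<and> y \<in> V"
    using assms(1) by (simp_all add: simple_graph_def)
  have fE: "finite E" using simple_graph_finite_edges[OF assms(1)] .
  have "odd (card (e \<inter> V1)) \<longleftrightarrow> \<not> (e \<subseteq> V1 \<or> e \<subseteq> V2)" if "e \<in> E" for e
  proof -
    from that edges obtain x y where "x \<noteq> y" "e = {x, y}" "x \<in> V" "y \<in> V" by blast
    then show ?thesis using odd_card_Int_doubleton_iff[of x y V1 V2] assms(2,3) by simp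
  qed
  then have "{e\<in>E. odd (card (e \<inter> V1))} = {e\<in>E. \<not> (e \<subseteq> V1 \<or> e \<subseteq> V2)}" by blast
  moreover have "finite V1" using fV assms(2) by blast
  ultimately show ?thesis
    using assms(4) sum_deg_eq_sum_card_Int[OF fE] even_sum_iff[OF fE, of "\<lambda>e. card (e \<inter> V1)"]
    by simp
qed

lemma odd_card_tree_edges_within_parts:
  assumes "simple_graph V E" "valid_edge_partition V E T F V1 V2"
    and "odd (\<Sum>u\<in>V1. deg E u)" "odd (card V)"
  shows "odd (card {e\<in>T. e \<subseteq> V1 \<or> e \<subseteq> V2})"
proof -
  let ?S = "{e\<in>T. e \<subseteq> V1 \<or> e \<subseteq> V2}" and ?X = "{e\<in>T. \<not> (e \<subseteq> V1 \<or> e \<subseteq> V2)}"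
  have TF: "T \<union> F = E" and tree: "spanning_tree V T"
    and parts: "V1 \<union> V2 = V" "V1 \<inter> V2 = {}" "V1 \<noteq> {}" and F_within: "\<forall>f\<in>F. f \<subseteq> V1 \<or> f \<subseteq> V2"
    using assms(2) by (simp_all add: valid_edge_partition_def spanning_2forest_def)
  have T_edges: "\<forall>e\<in>T. \<exists>x y. x \<noteq> y \<and> e = {x, y}"
    using assms(1) TF unfolding simple_graph_def by blast
  have "finite V" using assms(1) by (simp add: simple_graph_def)
  moreover have "V \<noteq> {}" using parts by blast
  ultimately have card_T: "card V = card T + 1" using card_spanning_tree tree T_edges by blast
  have "{e\<in>E. \<not> (e \<subseteq> V1 \<or> e \<subseteq> V2)} = ?X" using TF F_within by blast
  then have odd_X: "odd (card ?X)"
    using odd_card_crossing_edges[OF assms(1) parts(1,2) assms(3)] by simp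
  have "finite T" using simple_graph_finite_edges[OF assms(1)] TF by blast
  then have "card (?S \<union> ?X) = card ?S + card ?X" by (intro card_Un_disjoint) auto
  moreover have "?S \<union> ?X = T" by blast
  ultimately show ?thesis using card_T odd_X assms(4) by simp
qed

section \<open>Compatible cycles\<close>

lemma inj_on_fundamental_cycle:
  assumes "T \<inter> F = {}"
  shows "inj_on (fundamental_cycle F) T"
proof (rule inj_onI)
  fix e e' assume "e \<in> T" "e' \<in> T" and eq: "fundamental_cycle F e = fundamental_cycle F e'"
  have "fundamental_cycle F d \<inter> T = {d}" if "d \<in> T" for d
    using that assms by (auto simp: fundamental_cycle_def)
  then show "e = e'" using \<open>e \<in> T\<close> \<open>e' \<in> T\<close> eq by (metis singleton_inject)
qed

lemma compatible_cycle_eq_fundamental_cycle: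
  assumes "simple_graph V E" "valid_edge_partition V E T F V1 V2" "compatible_cycle E T V1 V2 C"
  obtains e where "e \<in> T" "e \<subseteq> V1 \<or> e \<subseteq> V2" "C = fundamental_cycle F e"
proof -
  have TF: "T \<union> F = E" "T \<inter> F = {}" and acyc: "acyclic_edges F"
    using assms(2) by (simp_all add: valid_edge_partition_def spanning_2forest_def)
  have F_edges: "\<forall>f\<in>F. \<exists>x y. x \<noteq> y \<and> f = {x, y}"
    using assms(1) TF(1) unfolding simple_graph_def by blast
  from assms(3) have cyc: "is_cycle E C" and within: "\<Union>C \<subseteq> V1 \<or> \<Union>C \<subseteq> V2"
    and "card (C \<inter> T) = 1" by (simp_all add: compatible_cycle_def)
  then obtain e where CT: "C \<inter> T = {e}" by (auto simp: card_1_singleton_iff)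
  then have "e \<in> C" "e \<in> T" by auto
  then have "e \<subseteq> V1 \<or> e \<subseteq> V2" using within by blast
  have "C \<subseteq> insert e F" using cyc CT TF(1) by (auto simp: is_cycle_def)
  then have "is_cycle (insert e F) C" using cyc by (simp add: is_cycle_def)
  then have "C = fundamental_cycle F e"
    using cycle_eq_fundamental_cycle[OF acyc F_edges] \<open>e \<in> C\<close> \<open>e \<in> T\<close> TF(2) by blast
  with \<open>e \<in> T\<close> \<open>e \<subseteq> V1 \<or> e \<subseteq> V2\<close> that show ?thesis by blast
qed

lemma compatible_fundamental_cycle:
  assumes "simple_graph V E" "valid_edge_partition V E T F V1 V2"
    and "e \<in> T" "e \<subseteq> W" "W \<in> {V1, V2}"
  shows "compatible_cycle E T V1 V2 (fundamental_cycle F e)"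
proof -
  have TF: "T \<union> F = E" "T \<inter> F = {}"
    and parts: "V1 \<inter> V2 = {}" and F_within: "\<forall>f\<in>F. f \<subseteq> V1 \<or> f \<subseteq> V2"
    and conn: "connected_on V1 F" "connected_on V2 F" and acyc: "acyclic_edges F"
    using assms(2) by (simp_all add: valid_edge_partition_def spanning_2forest_def)
  have edges: "\<forall>e\<in>E. \<exists>x y. x \<noteq> y \<and> e = {x, y}"
    using assms(1) unfolding simple_graph_def by blast
  then have F_edges: "\<forall>f\<in>F. \<exists>x y. x \<noteq> y \<and> f = {x, y}" using TF(1) by blast
  have "e \<in> E" "e \<notin> F" using assms(3) TF by auto
  then obtain a b where ab: "a \<noteq> b" "e = {a, b}" using edges by blast
  have "connected_on W F" using conn assms(5) by auto
  moreover have "\<forall>f\<in>F. f \<subseteq> W \<or> f \<inter> W = {}" using F_within parts assms(5) by blast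
  ultimately obtain C where C: "is_cycle (insert e F) C" "e \<in> C" "\<Union>C \<subseteq> W"
    using cycle_closing_edge_within[OF ab(2,1) \<open>e \<notin> F\<close> assms(4)] by blast
  then have "C = fundamental_cycle F e"
    using cycle_eq_fundamental_cycle[OF acyc F_edges] \<open>e \<notin> F\<close> by blast
  moreover have "is_cycle E C" using C(1) is_cycle_mono \<open>e \<in> E\<close> TF(1) by blast
  moreover have "C \<inter> T = {e}" using C(1,2) assms(3) TF(2) by (auto simp: is_cycle_def)
  ultimately show ?thesis using C(3) assms(5) by (auto simp: compatible_cycle_def)
qed

lemma compatible_cycles_eq_fundamental_cycles:
  assumes "simple_graph V E" "valid_edge_partition V E T F V1 V2"
  shows "{C. compatible_cycle E T V1 V2 C} = fundamental_cycle F ` {e\<in>T. e \<subseteq> V1 \<or> e \<subseteq> V2}"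
  using compatible_cycle_eq_fundamental_cycle[OF assms] compatible_fundamental_cycle[OF assms]
  by blast

theorem lemma5p3:
  fixes V :: "'a set" and E T F :: "'a set set" and V1 V2 :: "'a set"
  assumes "simple_graph V E"
    and "valid_edge_partition V E T F V1 V2"
    and "odd (\<Sum>u\<in>V1. deg E u)"
    and "odd (\<Sum>u\<in>V2. deg E u)"
    and "odd (card V)"
  shows "odd (card {C. compatible_cycle E T V1 V2 C})"
proof -
  have "T \<inter> F = {}" using assms(2) by (simp add: valid_edge_partition_def)
  then have "card {C. compatible_cycle E T V1 V2 C} = card {e\<in>T. e \<subseteq> V1 \<or> e \<subseteq> V2}"
    unfolding compatible_cycles_eq_fundamental_cycles[OF assms(1,2)]
    by (intro card_image inj_on_subset[OF inj_on_fundamental_cycle]) auto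
  then show ?thesis using odd_card_tree_edges_within_parts[OF assms(1,2,3,5)] by simp
qed

end
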